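(* Let $\Gamma$ be a connected, infinite, locally-finite, 3-connected, quasi-transitive planar graph with exactly one end, and let $M$ be the map in $\mathcal{X}\in\{\mathbb{E}^2,\mathbb{H}^2\}$ obtained by embedding $\Gamma$ via Babai's theorem (so every automorphism of $\Gamma$ is induced by an isometry of $\mathcal{X}$). Then $V(M)$ is a locally finite collection of vertices, i.e. every compact subset of $\mathcal{X}$ contains only finitely many vertices of $M$.
   Context: A map $M$ in a surface $X$ is a graph embedded in $X$: vertices are distinct points, edges are curves joining their endpoints which meet only at common endpoints, and each component of $X$ minus the embedded graph (a face) is homeomorphic to an open disc. Babai's theorem (cited, not proved here): a locally-finite 3-connected quasi-transitive planar graph with at most one end has an embedding as such a map in a natural geometry $\mathcal{X}$ (the Euclidean plane $\mathbb{E}^2$ or hyperbolic plane $\mathbb{H}^2$) such that all automorphisms of $\Gamma$ are induced by isometries of $\mathcal{X}$. A graph is quasi-transitive if $\mathrm{Aut}(\Gamma)$ has finitely many vertex orbits; ends are equivalence classes of rays, two rays being equivalent if joined by infinitely many disjoint paths. *)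

theory Defs
  imports "HOL-Analysis.Analysis"
begin

definition graph :: "'v set \<Rightarrow> ('v \<Rightarrow> 'v \<Rightarrow> bool) \<Rightarrow> bool" where
  "graph V E \<longleftrightarrow> (\<forall>u v. E u v \<longrightarrow> u \<in> V \<and> v \<in> V \<and> u \<noteq> v \<and> E v u)"

definition connected_on :: "'v set \<Rightarrow> ('v \<Rightarrow> 'v \<Rightarrow> bool) \<Rightarrow> bool" where
  "connected_on W E \<longleftrightarrow>
     (\<forall>u\<in>W. \<forall>v\<in>W. (\<lambda>x y. E x y \<and> x \<in> W \<and> y \<in> W)\<^sup>*\<^sup>* u v)"

definition locally_finite_graph :: "'v set \<Rightarrow> ('v \<Rightarrow> 'v \<Rightarrow> bool) \<Rightarrow> bool" where
  "locally_finite_graph V E \<longleftrightarrow> (\<forall>u\<in>V. finite {v. E u v})"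

definition k_connected :: "nat \<Rightarrow> 'v set \<Rightarrow> ('v \<Rightarrow> 'v \<Rightarrow> bool) \<Rightarrow> bool" where
  "k_connected k V E \<longleftrightarrow>
     (\<not> (finite V \<and> card V \<le> k)) \<and>
     (\<forall>S. S \<subseteq> V \<and> finite S \<and> card S < k \<longrightarrow> connected_on (V - S) E)"

definition graph_automorphism :: "'v set \<Rightarrow> ('v \<Rightarrow> 'v \<Rightarrow> bool) \<Rightarrow> ('v \<Rightarrow> 'v) \<Rightarrow> bool" where
  "graph_automorphism V E \<sigma> \<longleftrightarrow>
     bij_betw \<sigma> V V \<and> (\<forall>u\<in>V. \<forall>v\<in>V. E u v \<longleftrightarrow> E (\<sigma> u) (\<sigma> v))"

definition quasi_transitive :: "'v set \<Rightarrow> ('v \<Rightarrow> 'v \<Rightarrow> bool) \<Rightarrow> bool" where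
  "quasi_transitive V E \<longleftrightarrow>
     finite ((\<lambda>v. {\<sigma> v | \<sigma>. graph_automorphism V E \<sigma>}) ` V)"

definition ray :: "'v set \<Rightarrow> ('v \<Rightarrow> 'v \<Rightarrow> bool) \<Rightarrow> (nat \<Rightarrow> 'v) \<Rightarrow> bool" where
  "ray V E r \<longleftrightarrow> inj r \<and> (\<forall>n. r n \<in> V \<and> E (r n) (r (Suc n)))"

definition gpath :: "'v set \<Rightarrow> ('v \<Rightarrow> 'v \<Rightarrow> bool) \<Rightarrow> 'v list \<Rightarrow> bool" where
  "gpath V E p \<longleftrightarrow> p \<noteq> [] \<and> distinct p \<and> set p \<subseteq> V \<and>
     (\<forall>i. Suc i < length p \<longrightarrow> E (p ! i) (p ! Suc i))"

definition equiv_rays :: "'v set \<Rightarrow> ('v \<Rightarrow> 'v \<Rightarrow> bool) \<Rightarrow> (nat \<Rightarrow> 'v) \<Rightarrow> (nat \<Rightarrow> 'v) \<Rightarrow> bool" where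
  "equiv_rays V E r1 r2 \<longleftrightarrow>
     (\<exists>P :: nat \<Rightarrow> 'v list.
        (\<forall>i. gpath V E (P i) \<and> hd (P i) \<in> range r1 \<and> last (P i) \<in> range r2) \<and>
        (\<forall>i j. i \<noteq> j \<longrightarrow> set (P i) \<inter> set (P j) = {}))"

definition one_ended :: "'v set \<Rightarrow> ('v \<Rightarrow> 'v \<Rightarrow> bool) \<Rightarrow> bool" where
  "one_ended V E \<longleftrightarrow> (\<exists>r. ray V E r) \<and>
     (\<forall>r1 r2. ray V E r1 \<and> ray V E r2 \<longrightarrow> equiv_rays V E r1 r2)"

section \<open>The natural geometries, modelled in the complex numbers\<close>

datatype geometry = Euclidean | Hyperbolic

text \<open>The Euclidean plane is the whole complex plane; the hyperbolic plane is the
Poincare disc model (open unit disc) with the hyperbolic distance.  In both cases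
the metric topology is the usual subspace topology of the complex plane.\<close>
fun carrier_geom :: "geometry \<Rightarrow> complex set" where
  "carrier_geom Euclidean = UNIV"
| "carrier_geom Hyperbolic = ball 0 1"

definition hdist :: "complex \<Rightarrow> complex \<Rightarrow> real" where
  "hdist z w = arcosh (1 + 2 * (cmod (z - w))\<^sup>2 / ((1 - (cmod z)\<^sup>2) * (1 - (cmod w)\<^sup>2)))"

fun dist_geom :: "geometry \<Rightarrow> complex \<Rightarrow> complex \<Rightarrow> real" where
  "dist_geom Euclidean z w = dist z w"
| "dist_geom Hyperbolic z w = hdist z w"

definition isometry_geom :: "geometry \<Rightarrow> (complex \<Rightarrow> complex) \<Rightarrow> bool" where
  "isometry_geom X f \<longleftrightarrow> bij_betw f (carrier_geom X) (carrier_geom X) \<and>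
     (\<forall>z\<in>carrier_geom X. \<forall>w\<in>carrier_geom X. dist_geom X (f z) (f w) = dist_geom X z w)"

text \<open>A map of the graph (V,E) in X: vertex positions pos (injective), and for each
ordered adjacent pair (u,v) an arc c u v from pos u to pos v, with c v u the reverse
of c u v.\<close>

definition edge_img :: "('v \<Rightarrow> 'v \<Rightarrow> real \<Rightarrow> complex) \<Rightarrow> 'v \<Rightarrow> 'v \<Rightarrow> complex set" where
  "edge_img c u v = path_image (c u v)"

definition graph_image ::
  "'v set \<Rightarrow> ('v \<Rightarrow> 'v \<Rightarrow> bool) \<Rightarrow> ('v \<Rightarrow> complex) \<Rightarrow> ('v \<Rightarrow> 'v \<Rightarrow> real \<Rightarrow> complex) \<Rightarrow> complex set" where
  "graph_image V E pos c = pos ` V \<union> (\<Union>{edge_img c u v | u v. E u v})"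

definition is_map ::
  "geometry \<Rightarrow> 'v set \<Rightarrow> ('v \<Rightarrow> 'v \<Rightarrow> bool) \<Rightarrow> ('v \<Rightarrow> complex) \<Rightarrow> ('v \<Rightarrow> 'v \<Rightarrow> real \<Rightarrow> complex) \<Rightarrow> bool" where
  "is_map X V E pos c \<longleftrightarrow>
     inj_on pos V \<and> pos ` V \<subseteq> carrier_geom X \<and>
     (\<forall>u v. E u v \<longrightarrow>
        arc (c u v) \<and> pathstart (c u v) = pos u \<and> pathfinish (c u v) = pos v \<and>
        c v u = reversepath (c u v) \<and>
        edge_img c u v \<subseteq> carrier_geom X \<and>
        edge_img c u v \<inter> pos ` V = {pos u, pos v}) \<and>
     (\<forall>u v x y. E u v \<and> E x y \<and> {u, v} \<noteq> {x, y} \<longrightarrow>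
        edge_img c u v \<inter> edge_img c x y \<subseteq> pos ` ({u, v} \<inter> {x, y})) \<and>
     (\<forall>F \<in> components (carrier_geom X - graph_image V E pos c).
        F homeomorphic ball (0::complex) 1)"

definition induced_by_isometry ::
  "geometry \<Rightarrow> 'v set \<Rightarrow> ('v \<Rightarrow> 'v \<Rightarrow> bool) \<Rightarrow> ('v \<Rightarrow> complex) \<Rightarrow> ('v \<Rightarrow> 'v \<Rightarrow> real \<Rightarrow> complex) \<Rightarrow> ('v \<Rightarrow> 'v) \<Rightarrow> bool" where
  "induced_by_isometry X V E pos c \<sigma> \<longleftrightarrow>
     (\<exists>f. isometry_geom X f \<and> (\<forall>v\<in>V. f (pos v) = pos (\<sigma> v)) \<and>
          (\<forall>u v. E u v \<longrightarrow> f ` edge_img c u v = edge_img c (\<sigma> u) (\<sigma> v)))"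

end

theory Submission
  imports Defs
begin

(* If a compact set K contained infinitely many vertices, then, as there are only finitely
   many orbits, infinitely many of them would lie in a single orbit, so two of its points are
   arbitrarily close.  The isometries inducing automorphisms carry such a pair onto any point
   of the orbit, hence the positions P of the orbit have no isolated points.  Near a vertex,
   the closure of P is a complete space contained in the embedded graph (the faces are open
   and miss P), and it is covered by the countably many closed vertex points and edge arcs,
   each of which contains only finitely many points of P.  This contradicts Baire's theorem. *)

lemma graph_automorphism_id: "graph_automorphism V E id"
  by (simp add: graph_automorphism_def bij_betw_id)

lemma graph_automorphism_in: "graph_automorphism V E \<sigma> \<Longrightarrow> v \<in> V \<Longrightarrow> \<sigma> v \<in> V"
  unfolding graph_automorphism_def bij_betw_def by auto

lemma graph_automorphism_comp:
  assumes "graph_automorphism V E \<sigma>" "graph_automorphism V E \<tau>"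
  shows "graph_automorphism V E (\<sigma> \<circ> \<tau>)"
proof -
  have "E u v \<longleftrightarrow> E ((\<sigma> \<circ> \<tau>) u) ((\<sigma> \<circ> \<tau>) v)" if "u \<in> V" "v \<in> V" for u v
  proof -
    have "E u v \<longleftrightarrow> E (\<tau> u) (\<tau> v)"
      using assms(2) that unfolding graph_automorphism_def by blast
    also have "\<dots> \<longleftrightarrow> E (\<sigma> (\<tau> u)) (\<sigma> (\<tau> v))"
      using assms(1) graph_automorphism_in[OF assms(2)] that unfolding graph_automorphism_def by blast
    finally show ?thesis by simp
  qed
  moreover have "bij_betw (\<sigma> \<circ> \<tau>) V V"
    using assms bij_betw_trans unfolding graph_automorphism_def by blast
  ultimately show ?thesis by (simp add: graph_automorphism_def)
qed

lemma graph_automorphism_inv_into: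
  assumes "graph_automorphism V E \<sigma>"
  shows "graph_automorphism V E (inv_into V \<sigma>)"
proof -
  have bij: "bij_betw \<sigma> V V" and bij_inv: "bij_betw (inv_into V \<sigma>) V V"
    using assms bij_betw_inv_into unfolding graph_automorphism_def by blast+
  have "E u v \<longleftrightarrow> E (inv_into V \<sigma> u) (inv_into V \<sigma> v)" if "u \<in> V" "v \<in> V" for u v
  proof -
    have "inv_into V \<sigma> u \<in> V" "inv_into V \<sigma> v \<in> V" using bij_inv that bij_betwE by blast+
    moreover have "\<sigma> (inv_into V \<sigma> u) = u" "\<sigma> (inv_into V \<sigma> v) = v"
      using bij that by (simp_all add: bij_betw_inv_into_right)
    ultimately show ?thesis using assms unfolding graph_automorphism_def by metis
  qed
  with bij_inv show ?thesis by (simp add: graph_automorphism_def)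
qed

definition aut_orbit :: "'v set \<Rightarrow> ('v \<Rightarrow> 'v \<Rightarrow> bool) \<Rightarrow> 'v \<Rightarrow> 'v set" where
  "aut_orbit V E b = {\<sigma> b | \<sigma>. graph_automorphism V E \<sigma>}"

lemma aut_orbit_subset: "b \<in> V \<Longrightarrow> aut_orbit V E b \<subseteq> V"
  by (auto simp: aut_orbit_def graph_automorphism_in)

lemma self_in_aut_orbit: "b \<in> aut_orbit V E b"
  unfolding aut_orbit_def using graph_automorphism_id by (auto intro!: exI[of _ id])

lemma quasi_transitive_infinite_orbit_part:
  assumes "quasi_transitive V E" "S \<subseteq> V" "infinite S"
  obtains b where "b \<in> V" "infinite (aut_orbit V E b \<inter> S)"
proof -
  have cover: "S \<subseteq> (\<Union>Y\<in>aut_orbit V E ` V. Y \<inter> S)"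
  proof
    fix v assume "v \<in> S"
    then show "v \<in> (\<Union>Y\<in>aut_orbit V E ` V. Y \<inter> S)"
      using assms(2) self_in_aut_orbit[of v V E] by auto
  qed
  have orbits: "finite (aut_orbit V E ` V)"
    using assms(1) unfolding quasi_transitive_def aut_orbit_def .
  have "\<exists>b\<in>V. infinite (aut_orbit V E b \<inter> S)"
  proof (rule ccontr)
    assume all_finite: "\<not> ?thesis"
    have "finite (\<Union>Y\<in>aut_orbit V E ` V. Y \<inter> S)"
      by (rule finite_UN_I[OF orbits]) (use all_finite in auto)
    with cover assms(3) show False using finite_subset by blast
  qed
  with that show ?thesis by blast
qed

lemma quasi_transitive_orbit_accumulates:
  assumes "quasi_transitive V E" "inj_on pos V" "infinite {v \<in> V. pos v \<in> K}"
  obtains b where "b \<in> V" "infinite (pos ` aut_orbit V E b \<inter> K)"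
proof -
  let ?S = "{v \<in> V. pos v \<in> K}"
  obtain b where "b \<in> V" and b: "infinite (aut_orbit V E b \<inter> ?S)"
    using quasi_transitive_infinite_orbit_part[OF assms(1), of ?S] assms(3) by blast
  have "inj_on pos (aut_orbit V E b \<inter> ?S)"
    using assms(2) by (rule inj_on_subset) blast
  then have "infinite (pos ` (aut_orbit V E b \<inter> ?S))"
    using b by (simp add: finite_image_iff)
  moreover have "pos ` (aut_orbit V E b \<inter> ?S) \<subseteq> pos ` aut_orbit V E b \<inter> K"
    by blast
  ultimately show ?thesis
    using that \<open>b \<in> V\<close> finite_subset by blast
qed

lemma connected_locally_finite_countable:
  assumes "connected_on V E" "locally_finite_graph V E"
  shows "countable V"
proof (cases "V = {}")
  case False
  then obtain v0 where v0: "v0 \<in> V" by blast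
  define R where "R = (\<lambda>x y. E x y \<and> x \<in> V \<and> y \<in> V)"
  have finite_sphere: "finite {y. (R ^^ n) v0 y}" for n
  proof (induction n)
    case (Suc n)
    have "{y. (R ^^ Suc n) v0 y} \<subseteq> (\<Union>z\<in>{y. (R ^^ n) v0 y} \<inter> V. {y. E z y})"
      by (auto elim!: relpowp_Suc_E simp: R_def)
    moreover have "finite (\<Union>z\<in>{y. (R ^^ n) v0 y} \<inter> V. {y. E z y})"
      using Suc assms(2) unfolding locally_finite_graph_def by auto
    ultimately show ?case by (rule finite_subset)
  qed simp
  have "V \<subseteq> (\<Union>n. {y. (R ^^ n) v0 y})"
    using assms(1) v0 unfolding connected_on_def R_def by (auto simp: rtranclp_power)
  moreover have "countable (\<Union>n. {y. (R ^^ n) v0 y})"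
    using finite_sphere by (intro countable_UN) (auto intro: countable_finite)
  ultimately show ?thesis using countable_subset by blast
qed simp

lemma homeomorphic_open_imp_open:
  fixes S T :: "'a::euclidean_space set"
  assumes "S homeomorphic T" "open T"
  shows "open S"
proof -
  obtain f g where "homeomorphism T S f g"
    using assms(1) homeomorphic_sym unfolding homeomorphic_def by blast
  then have "continuous_on T f" "inj_on f T" "f ` T = S"
    unfolding homeomorphism_def by (auto intro: inj_on_inverseI)
  then show ?thesis using invariance_of_domain[OF _ assms(2)] by blast
qed

lemma Baire_perfect_set_not_covered:
  fixes P :: "'a::{real_normed_vector,heine_borel} set"
  assumes "P \<noteq> {}"
    and perfect: "\<And>x. x \<in> P \<Longrightarrow> x islimpt P"
    and "countable \<C>"
    and closed: "\<And>T. T \<in> \<C> \<Longrightarrow> closed T"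
    and sparse: "\<And>T. T \<in> \<C> \<Longrightarrow> finite (T \<inter> P)"
  shows "\<not> closure P \<subseteq> \<Union>\<C>"
proof
  assume cover: "closure P \<subseteq> \<Union>\<C>"
  define Q where "Q = closure P"
  have dense: "Q \<subseteq> closure (Q - T)" if "T \<in> \<C>" for T
  proof
    fix x assume "x \<in> Q"
    show "x \<in> closure (Q - T)"
    proof (rule ccontr)
      assume "x \<notin> closure (Q - T)"
      then obtain W where W: "open W" "x \<in> W" "W \<inter> (Q - T) = {}"
        unfolding closure_iff_nhds_not_empty by blast
      obtain p where p: "p \<in> W" "p \<in> P"
        using W \<open>x \<in> Q\<close> open_Int_closure_eq_empty[of W P] unfolding Q_def by blast
      then have "p islimpt P \<inter> W"
        using perfect W(1) by (blast intro: islimpt_Int_eventually eventually_at_in_open')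
      then have "infinite (P \<inter> W)" using islimpt_finite by blast
      moreover have "P \<inter> W \<subseteq> T \<inter> P"
        using W(3) closure_subset unfolding Q_def by blast
      ultimately show False using sparse[OF that] finite_subset by blast
    qed
  qed
  have "Q \<subseteq> closure (\<Inter>T\<in>\<C>. Q - T)"
  proof (rule Baire)
    fix T' assume "T' \<in> (\<lambda>T. Q - T) ` \<C>"
    then obtain T where T: "T \<in> \<C>" "T' = Q \<inter> - T" by blast
    have "openin (top_of_set Q) (Q \<inter> - T)"
      by (rule openin_open_Int) (use closed[OF T(1)] in auto)
    then show "openin (top_of_set Q) T' \<and> Q \<subseteq> closure T'"
      using dense[OF T(1)] T(2) by (simp add: Diff_eq)
  next
    show "closed Q" unfolding Q_def by simp
    show "countable ((\<lambda>T. Q - T) ` \<C>)" using \<open>countable \<C>\<close> by simp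
  qed
  moreover have "\<C> \<noteq> {}"
    using cover assms(1) closure_subset by blast
  then have "(\<Inter>T\<in>\<C>. Q - T) = Q - \<Union>\<C>"
    by auto
  also have "\<dots> = {}"
    using cover unfolding Q_def by auto
  ultimately show False
    using assms(1) closure_subset unfolding Q_def by auto
qed

lemma perfect_set_localize:
  fixes P :: "'a::metric_space set"
  assumes "open U" "p \<in> P" "p \<in> U" and perfect: "\<And>x. x \<in> P \<Longrightarrow> x islimpt P"
  obtains Q where "Q \<subseteq> P" "Q \<noteq> {}" "\<And>x. x \<in> Q \<Longrightarrow> x islimpt Q" "closure Q \<subseteq> U"
proof -
  obtain r where "r > 0" "cball p r \<subseteq> U"
    using assms(1,3) unfolding open_contains_cball by blast
  let ?Q = "P \<inter> ball p r"
  have "p \<in> ?Q" using assms(2) \<open>r > 0\<close> by simp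
  moreover have "x islimpt ?Q" if "x \<in> ?Q" for x
    using perfect that by (blast intro: islimpt_Int_eventually eventually_at_in_open')
  moreover have "closure ?Q \<subseteq> cball p r"
    by (rule closure_minimal) auto
  ultimately show ?thesis
    using that[of ?Q] \<open>cball p r \<subseteq> U\<close> by blast
qed

lemma open_carrier_geom: "open (carrier_geom X)"
  by (cases X) auto

lemma disc_factor_bounds:
  fixes z w :: complex
  assumes "cmod z < 1" "cmod w < 1"
  shows "0 < (1 - (cmod z)\<^sup>2) * (1 - (cmod w)\<^sup>2)" "(1 - (cmod z)\<^sup>2) * (1 - (cmod w)\<^sup>2) \<le> 1"
proof -
  have "(cmod z)\<^sup>2 < 1" "(cmod w)\<^sup>2 < 1"
    using assms by (simp_all add: abs_square_less_1)
  then show "0 < (1 - (cmod z)\<^sup>2) * (1 - (cmod w)\<^sup>2)" by simp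
  show "(1 - (cmod z)\<^sup>2) * (1 - (cmod w)\<^sup>2) \<le> 1"
    using \<open>(cmod z)\<^sup>2 < 1\<close> \<open>(cmod w)\<^sup>2 < 1\<close> by (simp add: mult_le_one)
qed

lemma hdist_less_arcosh_iff:
  fixes z w :: complex
  assumes "cmod z < 1" "cmod w < 1" "t \<ge> 0"
  shows "hdist z w < arcosh (1 + t) \<longleftrightarrow>
    2 * (cmod (z - w))\<^sup>2 / ((1 - (cmod z)\<^sup>2) * (1 - (cmod w)\<^sup>2)) < t"
  using assms disc_factor_bounds(1)[OF assms(1,2)] by (simp add: hdist_def)

lemma dist_geom_small_imp_dist_small:
  assumes "e > 0"
  obtains d where "d > 0"
    "\<And>z w. z \<in> carrier_geom X \<Longrightarrow> w \<in> carrier_geom X \<Longrightarrow> dist_geom X z w < d \<Longrightarrow> dist z w < e"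
proof (cases X)
  case Euclidean
  then show ?thesis using assms that by auto
next
  case Hyperbolic
  have "dist z w < e" if "cmod z < 1" "cmod w < 1" "hdist z w < arcosh (1 + e\<^sup>2)" for z w
  proof -
    define D where "D = (1 - (cmod z)\<^sup>2) * (1 - (cmod w)\<^sup>2)"
    have "0 < D" "D \<le> 1" unfolding D_def using disc_factor_bounds that(1,2) by auto
    have "(cmod (z - w))\<^sup>2 * D \<le> (cmod (z - w))\<^sup>2"
      using \<open>D \<le> 1\<close> by (simp add: mult_left_le)
    then have "(cmod (z - w))\<^sup>2 \<le> 2 * (cmod (z - w))\<^sup>2 / D"
      using \<open>0 < D\<close> by (simp add: le_divide_eq) (use zero_le_power2[of "cmod (z - w)"] in linarith)
    also have "\<dots> < e\<^sup>2"
      using hdist_less_arcosh_iff[of z w "e\<^sup>2"] that unfolding D_def by simp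
    finally show ?thesis
      using assms by (simp add: dist_norm power_less_imp_less_base)
  qed
  moreover have "arcosh (1 + e\<^sup>2) > 0" using assms by simp
  ultimately show ?thesis using Hyperbolic that[of "arcosh (1 + e\<^sup>2)"] by auto
qed

lemma dist_small_imp_dist_geom_small_on_compact:
  assumes "compact K" "K \<subseteq> carrier_geom X" "e > 0"
  obtains d where "d > 0"
    "\<And>z w. z \<in> K \<Longrightarrow> w \<in> K \<Longrightarrow> dist z w < d \<Longrightarrow> dist_geom X z w < e"
proof (cases X)
  case Euclidean
  then show ?thesis using assms that by auto
next
  case Hyperbolic
  obtain R where R: "0 \<le> R" "R < 1" "\<And>z. z \<in> K \<Longrightarrow> cmod z \<le> R"
  proof (cases "K = {}")
    case False
    then obtain x where "x \<in> K" "\<And>y. y \<in> K \<Longrightarrow> cmod y \<le> cmod x"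
      using compact_attains_sup[OF compact_continuous_image[OF continuous_on_norm_id assms(1)]]
      by auto
    moreover have "cmod x < 1" using \<open>x \<in> K\<close> assms(2) Hyperbolic by auto
    ultimately show ?thesis using that[of "cmod x"] by auto
  qed (use that[of 0] in auto)
  define m where "m = 1 - R\<^sup>2"
  have m: "0 < m" unfolding m_def using R by (simp add: abs_square_less_1)
  define d where "d = m * sqrt ((cosh e - 1) / 2)"
  have cosh_e: "cosh e - 1 > 0"
    using assms(3) cosh_real_ge_1[of e] cosh_real_one_iff[of e] by linarith
  have "hdist z w < e" if "z \<in> K" "w \<in> K" "dist z w < d" for z w
  proof -
    have bounded: "cmod z \<le> R" "cmod w \<le> R" using R that by auto
    then have disc: "cmod z < 1" "cmod w < 1" using R(2) by auto
    have "m \<le> 1 - (cmod z)\<^sup>2" "m \<le> 1 - (cmod w)\<^sup>2"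
      using bounded unfolding m_def by (auto intro: power_mono)
    then have "m\<^sup>2 \<le> (1 - (cmod z)\<^sup>2) * (1 - (cmod w)\<^sup>2)"
      unfolding power2_eq_square using m by (intro mult_mono) auto
    then have "2 * (cmod (z - w))\<^sup>2 / ((1 - (cmod z)\<^sup>2) * (1 - (cmod w)\<^sup>2)) \<le> 2 * (cmod (z - w))\<^sup>2 / m\<^sup>2"
      using m disc_factor_bounds(1)[OF disc] by (intro divide_left_mono) auto
    also have "\<dots> < 2 * d\<^sup>2 / m\<^sup>2"
      using that(3) m by (intro divide_strict_right_mono mult_strict_left_mono power_strict_mono)
        (auto simp: dist_norm)
    also have "\<dots> = cosh e - 1"
      unfolding d_def using m cosh_e by (simp add: power_mult_distrib)
    finally have "hdist z w < arcosh (1 + (cosh e - 1))"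
      using hdist_less_arcosh_iff[OF disc, of "cosh e - 1"] cosh_e by simp
    then show ?thesis using assms(3) by (simp add: arcosh_cosh_real)
  qed
  moreover have "d > 0" unfolding d_def using m cosh_e by simp
  ultimately show ?thesis using Hyperbolic that[of d] by auto
qed

lemma is_map_vertexD:
  assumes "is_map X V E pos c"
  shows "inj_on pos V" "pos ` V \<subseteq> carrier_geom X"
  using assms by (simp_all add: is_map_def)

lemma is_map_edgeD:
  assumes "is_map X V E pos c" "E u v"
  shows "arc (c u v)" "edge_img c u v \<inter> pos ` V = {pos u, pos v}"
  using assms by (simp_all add: is_map_def)

lemma is_map_open_complement:
  assumes "is_map X V E pos c"
  shows "open (carrier_geom X - graph_image V E pos c)"
proof -
  let ?U = "carrier_geom X - graph_image V E pos c"
  have "\<forall>F\<in>components ?U. F homeomorphic ball (0::complex) 1"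
    using assms unfolding is_map_def by (elim conjE)
  then have "open F" if "F \<in> components ?U" for F
    using that homeomorphic_open_imp_open[OF _ open_ball] by blast
  then have "open (\<Union>(components ?U))" by blast
  then show ?thesis by simp
qed

definition map_cells ::
  "'v set \<Rightarrow> ('v \<Rightarrow> 'v \<Rightarrow> bool) \<Rightarrow> ('v \<Rightarrow> complex) \<Rightarrow> ('v \<Rightarrow> 'v \<Rightarrow> real \<Rightarrow> complex) \<Rightarrow> complex set set"
where
  "map_cells V E pos c = (\<lambda>v. {pos v}) ` V \<union> {edge_img c u v | u v. E u v}"

lemma Union_map_cells: "\<Union>(map_cells V E pos c) = graph_image V E pos c"
  by (auto simp: map_cells_def graph_image_def)

lemma countable_map_cells:
  assumes "graph V E" "countable V"
  shows "countable (map_cells V E pos c)"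
proof -
  have "{(u, v). E u v} \<subseteq> V \<times> V"
    using assms(1) unfolding graph_def by blast
  then have "countable {(u, v). E u v}"
    by (rule countable_subset) (use assms(2) in simp)
  then have "countable ((\<lambda>(u, v). edge_img c u v) ` {(u, v). E u v})"
    by (rule countable_image)
  moreover have "{edge_img c u v | u v. E u v} = (\<lambda>(u, v). edge_img c u v) ` {(u, v). E u v}"
    by auto
  moreover have "countable ((\<lambda>v. {pos v}) ` V)"
    using assms(2) by (rule countable_image)
  ultimately show ?thesis
    unfolding map_cells_def by simp
qed

lemma map_cell_closed_meets_finitely_many_vertices:
  assumes "is_map X V E pos c" "T \<in> map_cells V E pos c"
  shows "closed T" "finite (T \<inter> pos ` V)"
proof -
  have "closed T \<and> finite (T \<inter> pos ` V)"
  proof (cases "T \<in> (\<lambda>v. {pos v}) ` V")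
    case False
    then obtain u v where "E u v" "T = edge_img c u v"
      using assms(2) unfolding map_cells_def by auto
    then show ?thesis
      using is_map_edgeD[OF assms(1)] unfolding edge_img_def
      by (simp add: arc_imp_path closed_path_image)
  qed auto
  then show "closed T" "finite (T \<inter> pos ` V)" by auto
qed

lemma is_map_no_perfect_vertex_set:
  assumes map: "is_map X V E pos c" and "graph V E" "countable V"
    and "P \<subseteq> pos ` V" "p \<in> P"
    and perfect: "\<And>x. x \<in> P \<Longrightarrow> x islimpt P"
  shows False
proof -
  let ?G = "graph_image V E pos c"
  have "p \<in> carrier_geom X"
    using assms(4,5) is_map_vertexD(2)[OF map] by blast
  then obtain Q where Q: "Q \<subseteq> P" "Q \<noteq> {}" "\<And>x. x \<in> Q \<Longrightarrow> x islimpt Q"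
    and "closure Q \<subseteq> carrier_geom X"
    using perfect_set_localize[OF open_carrier_geom assms(5) _ perfect] by blast
  have "Q \<inter> (carrier_geom X - ?G) = {}"
    using Q(1) assms(4) unfolding graph_image_def by blast
  then have "closure Q \<inter> (carrier_geom X - ?G) = {}"
    using open_Int_closure_eq_empty[OF is_map_open_complement[OF map]] by blast
  then have "closure Q \<subseteq> \<Union>(map_cells V E pos c)"
    using \<open>closure Q \<subseteq> carrier_geom X\<close> by (auto simp: Union_map_cells)
  moreover have "finite (T \<inter> Q)" if "T \<in> map_cells V E pos c" for T
    using map_cell_closed_meets_finitely_many_vertices(2)[OF map that] Q(1) assms(4)
    by (meson Int_mono finite_subset order_refl)
  ultimately show False
    using Baire_perfect_set_not_covered[OF Q(2,3) countable_map_cells[OF assms(2,3)]]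
      map_cell_closed_meets_finitely_many_vertices(1)[OF map] by blast
qed

lemma homogeneous_accumulating_set_perfect:
  assumes P: "P \<subseteq> carrier_geom X"
    and homogeneous: "\<And>p q. p \<in> P \<Longrightarrow> q \<in> P \<Longrightarrow> \<exists>f. isometry_geom X f \<and> f ` P \<subseteq> P \<and> f p = q"
    and K: "compact K" "K \<subseteq> carrier_geom X"
    and accumulating: "infinite (P \<inter> K)"
    and "x \<in> P"
  shows "x islimpt P"
  unfolding islimpt_approachable
proof (intro allI impI)
  fix e :: real assume "e > 0"
  obtain d' where "d' > 0" and d':
    "\<And>z w. z \<in> carrier_geom X \<Longrightarrow> w \<in> carrier_geom X \<Longrightarrow> dist_geom X z w < d' \<Longrightarrow> dist z w < e"
    using dist_geom_small_imp_dist_small[OF \<open>e > 0\<close>] by blast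
  obtain d where "d > 0" and d:
    "\<And>z w. z \<in> K \<Longrightarrow> w \<in> K \<Longrightarrow> dist z w < d \<Longrightarrow> dist_geom X z w < d'"
    using dist_small_imp_dist_geom_small_on_compact[OF K \<open>d' > 0\<close>] by blast
  obtain q where "q islimpt (P \<inter> K)"
    using K(1) accumulating compact_eq_Bolzano_Weierstrass by (metis inf_le2)
  then have near: "infinite (P \<inter> K \<inter> ball q (d / 2))"
    using \<open>d > 0\<close> by (simp add: islimpt_eq_infinite_ball)
  then obtain p1 where p1: "p1 \<in> P \<inter> K \<inter> ball q (d / 2)"
    using infinite_imp_nonempty by blast
  have "infinite (P \<inter> K \<inter> ball q (d / 2) - {p1})"
    using near by simp
  then obtain p2 where p2: "p2 \<in> P \<inter> K \<inter> ball q (d / 2) - {p1}"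
    using infinite_imp_nonempty by blast
  have p: "p1 \<in> P \<inter> K \<inter> ball q (d / 2)" "p2 \<in> P \<inter> K \<inter> ball q (d / 2)" "p1 \<noteq> p2"
    using p1 p2 by auto
  then have "dist p1 p2 < d"
    using dist_triangle_half_l[of p1 q d p2] by (auto simp: dist_commute)
  then have close: "dist_geom X p1 p2 < d'"
    using d p by blast
  \<comment> \<open>the isometry carrying p2 to x carries p1 to a point of P near x\<close>
  obtain f where f: "isometry_geom X f" "f ` P \<subseteq> P" "f p2 = x"
    using homogeneous p(2) \<open>x \<in> P\<close> by blast
  have in_carrier: "p1 \<in> carrier_geom X" "p2 \<in> carrier_geom X"
    using p P by auto
  have "f p1 \<noteq> x"
    using f in_carrier p(3) unfolding isometry_geom_def bij_betw_def by (metis inj_on_eq_iff)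
  moreover have "dist_geom X (f p1) x = dist_geom X p1 p2"
    using f in_carrier unfolding isometry_geom_def by auto
  moreover have "f p1 \<in> P"
    using f p by auto
  moreover have "dist (f p1) x < e"
    using d'[of "f p1" x] close calculation P \<open>x \<in> P\<close> by auto
  ultimately show "\<exists>x'\<in>P. x' \<noteq> x \<and> dist x' x < e"
    by blast
qed

lemma aut_orbit_positions_homogeneous:
  assumes induced: "\<forall>\<sigma>. graph_automorphism V E \<sigma> \<longrightarrow> induced_by_isometry X V E pos c \<sigma>"
    and "b \<in> V"
    and "p \<in> pos ` aut_orbit V E b" "q \<in> pos ` aut_orbit V E b"
  shows "\<exists>f. isometry_geom X f \<and> f ` pos ` aut_orbit V E b \<subseteq> pos ` aut_orbit V E b \<and> f p = q"
proof -
  obtain \<sigma> \<tau> where aut: "graph_automorphism V E \<sigma>" "graph_automorphism V E \<tau>"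
    and pq: "p = pos (\<sigma> b)" "q = pos (\<tau> b)"
    using assms(3,4) unfolding aut_orbit_def by blast
  define \<rho> where "\<rho> = \<tau> \<circ> inv_into V \<sigma>"
  have \<rho>: "graph_automorphism V E \<rho>"
    unfolding \<rho>_def using aut by (intro graph_automorphism_comp graph_automorphism_inv_into)
  have "\<rho> (\<sigma> b) = \<tau> b"
    using aut(1) \<open>b \<in> V\<close> unfolding \<rho>_def graph_automorphism_def bij_betw_def by simp
  have "induced_by_isometry X V E pos c \<rho>"
    using induced \<rho> by blast
  then obtain f where f: "isometry_geom X f" "\<forall>v\<in>V. f (pos v) = pos (\<rho> v)"
    unfolding induced_by_isometry_def by blast
  have "f (pos (\<upsilon> b)) \<in> pos ` aut_orbit V E b" if "graph_automorphism V E \<upsilon>" for \<upsilon>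
  proof -
    have "f (pos (\<upsilon> b)) = pos ((\<rho> \<circ> \<upsilon>) b)"
      using f(2) graph_automorphism_in[OF that \<open>b \<in> V\<close>] by simp
    then show ?thesis
      using graph_automorphism_comp[OF \<rho> that] unfolding aut_orbit_def by blast
  qed
  then have "f ` pos ` aut_orbit V E b \<subseteq> pos ` aut_orbit V E b"
    unfolding aut_orbit_def by blast
  moreover have "f p = q"
    using f(2) graph_automorphism_in[OF aut(1) \<open>b \<in> V\<close>] \<open>\<rho> (\<sigma> b) = \<tau> b\<close> pq by simp
  ultimately show ?thesis using f(1) by blast
qed

theorem lemma2p3:
  fixes V :: "'v set" and E :: "'v \<Rightarrow> 'v \<Rightarrow> bool"
    and X :: geometry and pos :: "'v \<Rightarrow> complex" and c :: "'v \<Rightarrow> 'v \<Rightarrow> real \<Rightarrow> complex"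
  assumes "graph V E"
    and "connected_on V E"
    and "infinite V"
    and "locally_finite_graph V E"
    and "k_connected 3 V E"
    and "quasi_transitive V E"
    and "one_ended V E"
    and "is_map X V E pos c"
    and "\<forall>\<sigma>. graph_automorphism V E \<sigma> \<longrightarrow> induced_by_isometry X V E pos c \<sigma>"
  shows "\<forall>K. compact K \<and> K \<subseteq> carrier_geom X \<longrightarrow> finite {v \<in> V. pos v \<in> K}"
proof (intro allI impI)
  fix K assume K: "compact K \<and> K \<subseteq> carrier_geom X"
  show "finite {v \<in> V. pos v \<in> K}"
  proof (rule ccontr)
    assume "infinite {v \<in> V. pos v \<in> K}"
    then obtain b where "b \<in> V" and accumulating: "infinite (pos ` aut_orbit V E b \<inter> K)"
      using quasi_transitive_orbit_accumulates[OF assms(6) is_map_vertexD(1)[OF assms(8)]] by blast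
    let ?P = "pos ` aut_orbit V E b"
    have P: "?P \<subseteq> pos ` V" "?P \<subseteq> carrier_geom X"
      using aut_orbit_subset[OF \<open>b \<in> V\<close>] is_map_vertexD(2)[OF assms(8)] by blast+
    have perfect: "x islimpt ?P" if "x \<in> ?P" for x
      using homogeneous_accumulating_set_perfect[OF P(2)
          aut_orbit_positions_homogeneous[OF assms(9) \<open>b \<in> V\<close>] _ _ accumulating that] K
      by blast
    show False
      using is_map_no_perfect_vertex_set[OF assms(8,1) connected_locally_finite_countable[OF assms(2,4)]
          P(1) imageI[OF self_in_aut_orbit] perfect] .
  qed
qed

end
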